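(* Consider a stationary memoryless uncertain channel with single-symbol map $N$ as described in the context, and let $0\le\delta_1<m_{\mathscr{Y}}(V_N)$. Let $\bar X$ be a one-step transmitted UV with $[\![\bar X]\!]\subseteq\mathscr{X}$, $\bar Y$ its received UV, and $\bar\delta\ge0$ such that $\bar X\in\mathscr{F}_{\bar\delta}(1)$, $\bar\delta\le\delta_1/m_{\mathscr{Y}}([\![\bar Y]\!])$ and $$I_{\bar\delta/|[\![\bar X]\!]|}(\bar Y;\bar X)=\sup\Big\{I_{\tilde\delta/|[\![X(1)]\!]|}(Y(1);X(1)) : \tilde\delta\ge0,\ X(1)\in\mathscr{F}_{\tilde\delta}(1),\ \tilde\delta\le\delta_1/m_{\mathscr{Y}}([\![Y(1)]\!])\Big\}.$$ Let $\hat\delta=\max_{S\in[\![\bar Y|\bar X]\!]^*_{\bar\delta/|[\![\bar X]\!]|}} m_{\mathscr{Y}}(S)/m_{\mathscr{Y}}([\![\bar Y]\!])$. If for all $n>1$ we have $\bar\delta(\hat\delta\,|[\![\bar X]\!]|)^{n-1}\le\delta_n<1$, then under the product uncertainty assumption $C_N(\{\delta_n\})_*=I_{\bar\delta/|[\![\bar X]\!]|}(\bar Y;\bar X)$.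
   Context: Uncertain variables (UVs): a UV is a map $U$ from a sample space $\Omega$ to a set; jointly considered UVs share $\Omega$. $[\![U]\!]=\{U(\omega)\}$; $[\![U|w]\!]=\{U(\omega):W(\omega)=w\}$, $[\![U|W]\!]=\{[\![U|w]\!]:w\in[\![W]\!]\}$. An uncertainty function on a set $\mathscr{U}$ is a map $m$ on subsets of $\mathscr{U}$ with $m(\emptyset)=0$, $0<m(S)<\infty$ for nonempty $S$, $\max\{m(S_1),m(S_2)\}\le m(S_1\cup S_2)$. Association: $\mathscr{A}(X;Y)=\{m_{\mathscr{X}}([\![X|y_1]\!]\cap[\![X|y_2]\!])/m_{\mathscr{X}}([\![X]\!]):y_1\ne y_2\in[\![Y]\!]\}\setminus\{0\}$, $\mathscr{A}(Y;X)=\{m_{\mathscr{Y}}([\![Y|x_1]\!]\cap[\![Y|x_2]\!])/m_{\mathscr{Y}}([\![Y]\!]):x_1\ne x_2\in[\![X]\!]\}\setminus\{0\}$; $\mathscr{A}\succ\delta$: all elements $>\delta$ (false for $\emptyset$); $\mathscr{A}\preceq\delta$: all elements $\le\delta$ (true for $\emptyset$); $(X,Y)\stackrel{d}{\leftrightarrow}(\delta_1,\delta_2)$ iff $\mathscr{A}(X;Y)\succ\delta_1,\mathscr{A}(Y;X)\succ\delta_2$; $(X,Y)\stackrel{a}{\leftrightarrow}(\delta_1,\delta_2)$ iff $\mathscr{A}(X;Y)\preceq\delta_1,\mathscr{A}(Y;X)\preceq\delta_2$. $\delta$-mutual information: for UVs $U$ (with uncertainty function $m_{\mathscr{U}}$)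 and $W$, $u,u'\in[\![U]\!]$ are $\delta$-connected via $[\![U|W]\!]$ if there are $w_1,\dots,w_N\in[\![W]\!]$ with $u\in[\![U|w_1]\!]$, $u'\in[\![U|w_N]\!]$, $m_{\mathscr{U}}([\![U|w_i]\!]\cap[\![U|w_{i-1}]\!])/m_{\mathscr{U}}([\![U]\!])>\delta$ for $1<i\le N$; a set is $\delta$-connected if all pairs of its points are. A $\delta$-overlap family $[\![U|W]\!]^*_\delta$ is a family of distinct subsets covering $[\![U]\!]$, of largest cardinality among covering families with (i) each member $\delta$-connected and containing some $[\![U|w]\!]$; (ii) distinct members $S_1,S_2$ satisfy $m_{\mathscr{U}}(S_1\cap S_2)\le\delta\,m_{\mathscr{U}}([\![U]\!])$; (iii) each $[\![U|w]\!]$ contained in some member. $I_\delta(U;W)=\log_2|[\![U|W]\!]^*_\delta|$ if such a family exists, else $0$. Stationary memoryless channel: $\mathscr{X}$ is a totally bounded normed metric space, $\mathscr{Y}$ an output set, $N:\mathscr{X}\to2^{\mathscr{Y}}$; for $x(1:n)\in\mathscr{X}^n$, $S_N(x(1:n))=N(x(1))\times\cdots\times N(x(n))$. $m_{\mathscr{Y}}$ (resp. $m_{\mathscr{X}}$) is an uncertainty function on each $\mathscr{Y}^n$ (resp. $\mathscr{X}^n$), with $m_{\mathscr{Y}}(\mathscr{Y}^n)=1$. $V_N=N(x^* )$ with $x^*$ minimizing $m_{\mathscr{Y}}(N(x))$. A discrete $\mathcal{C}_n\subseteq\mathscr{X}^n$ is $(N,\delta_n)$-distinguishable if $m_{\mathscr{Y}}(S_N(x_1(1:n))\cap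 S_N(x_2(1:n)))/m_{\mathscr{Y}}(\mathscr{Y}^n)\le\delta_n/|\mathcal{C}_n|$ for all distinct codewords; $R_{\delta_n}=\sup\frac1n\log_2|\mathcal{C}_n|$ over such codebooks; $C_N(\{\delta_n\})_*=\inf_{n\ge1}R_{\delta_n}$. For a codebook $\mathcal{C}_n$, transmitted UV $X(1:n)$ and received UV $Y(1:n)$ satisfy $[\![X(1:n)]\!]=\mathcal{C}_n$, $[\![Y(1:n)]\!]=\bigcup_{x(1:n)\in\mathcal{C}_n}S_N(x(1:n))$, $[\![Y(1:n)|x(1:n)]\!]=\{y\in[\![Y(1:n)]\!]:y\in S_N(x(1:n))\}$, $[\![X(1:n)|y(1:n)]\!]=\{x\in[\![X(1:n)]\!]:y(1:n)\in S_N(x)\}$. $\mathscr{F}_\delta(n)$ is the set of transmitted UVs $X(1:n)$ with $[\![X(1:n)]\!]\subseteq\mathscr{X}^n$ such that $(X(1:n),Y(1:n))\stackrel{d}{\leftrightarrow}(0,\delta/|[\![X(1:n)]\!]|)$ or $(X(1:n),Y(1:n))\stackrel{a}{\leftrightarrow}(1,\delta/|[\![X(1:n)]\!]|)$. Product uncertainty assumption: $m_{\mathscr{Y}}(S_1\times\cdots\times S_n)=\prod_i m_{\mathscr{Y}}(S_i)$ for all $n$ and $S_i\subseteq\mathscr{Y}$. *)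

theory Defs
  imports "HOL-Analysis.Analysis" "HOL-Library.Extended_Real"
begin

definition uncertainty_fun :: "'a set \<Rightarrow> ('a set \<Rightarrow> real) \<Rightarrow> bool" where
  "uncertainty_fun U m \<longleftrightarrow>
     m {} = 0 \<and>
     (\<forall>S. S \<subseteq> U \<and> S \<noteq> {} \<longrightarrow> 0 < m S) \<and>
     (\<forall>S1 S2. S1 \<subseteq> U \<and> S2 \<subseteq> U \<longrightarrow> max (m S1) (m S2) \<le> m (S1 \<union> S2))"

text \<open>m: uncertainty function, Ur: the range of U, F: the family of conditional ranges of U given W.\<close>

definition delta_connected_pts ::
  "('a set \<Rightarrow> real) \<Rightarrow> 'a set \<Rightarrow> 'a set set \<Rightarrow> real \<Rightarrow> 'a \<Rightarrow> 'a \<Rightarrow> bool" where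
  "delta_connected_pts m Ur F \<delta> u u' \<longleftrightarrow>
     (\<exists>Ss. Ss \<noteq> [] \<and> set Ss \<subseteq> F \<and> u \<in> hd Ss \<and> u' \<in> last Ss \<and>
        (\<forall>i. 0 < i \<and> i < length Ss \<longrightarrow> m (Ss ! i \<inter> Ss ! (i - 1)) / m Ur > \<delta>))"

definition delta_connected_set ::
  "('a set \<Rightarrow> real) \<Rightarrow> 'a set \<Rightarrow> 'a set set \<Rightarrow> real \<Rightarrow> 'a set \<Rightarrow> bool" where
  "delta_connected_set m Ur F \<delta> S \<longleftrightarrow> (\<forall>u\<in>S. \<forall>u'\<in>S. delta_connected_pts m Ur F \<delta> u u')"

definition overlap_admissible ::
  "('a set \<Rightarrow> real) \<Rightarrow> 'a set \<Rightarrow> 'a set set \<Rightarrow> real \<Rightarrow> 'a set set \<Rightarrow> bool" where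
  "overlap_admissible m Ur F \<delta> D \<longleftrightarrow>
     (\<forall>S\<in>D. S \<subseteq> Ur) \<and> \<Union>D = Ur \<and>
     (\<forall>S\<in>D. delta_connected_set m Ur F \<delta> S \<and> (\<exists>A\<in>F. A \<subseteq> S)) \<and>
     (\<forall>S1\<in>D. \<forall>S2\<in>D. S1 \<noteq> S2 \<longrightarrow> m (S1 \<inter> S2) \<le> \<delta> * m Ur) \<and>
     (\<forall>A\<in>F. \<exists>S\<in>D. A \<subseteq> S)"

definition overlap_family ::
  "('a set \<Rightarrow> real) \<Rightarrow> 'a set \<Rightarrow> 'a set set \<Rightarrow> real \<Rightarrow> 'a set set \<Rightarrow> bool" where
  "overlap_family m Ur F \<delta> D \<longleftrightarrow>
     overlap_admissible m Ur F \<delta> D \<and>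
     (\<forall>D'. overlap_admissible m Ur F \<delta> D' \<longrightarrow> (\<exists>f. inj_on f D' \<and> f ` D' \<subseteq> D))"

definition delta_MI :: "('a set \<Rightarrow> real) \<Rightarrow> 'a set \<Rightarrow> 'a set set \<Rightarrow> real \<Rightarrow> real" where
  "delta_MI m Ur F \<delta> =
     (if \<exists>D. overlap_family m Ur F \<delta> D
      then log 2 (real (card (SOME D. overlap_family m Ur F \<delta> D))) else 0)"

definition Xn :: "'x set \<Rightarrow> nat \<Rightarrow> 'x list set" where
  "Xn Xset n = {xs. length xs = n \<and> set xs \<subseteq> Xset}"

definition Yn :: "nat \<Rightarrow> 'y list set" where
  "Yn n = {ys. length ys = n}"

definition SN :: "('x \<Rightarrow> 'y set) \<Rightarrow> 'x list \<Rightarrow> 'y list set" where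
  "SN N xs = listset (map N xs)"

definition mY1 :: "('y list set \<Rightarrow> real) \<Rightarrow> 'y set \<Rightarrow> real" where
  "mY1 mY S = mY ((\<lambda>y. [y]) ` S)"

text \<open>For a codebook C (= range of the transmitted UV X(1:n)):\<close>
definition rangeY :: "('x \<Rightarrow> 'y set) \<Rightarrow> 'x list set \<Rightarrow> 'y list set" where
  "rangeY N C = (\<Union>x\<in>C. SN N x)"

definition condY :: "('x \<Rightarrow> 'y set) \<Rightarrow> 'x list set \<Rightarrow> 'x list \<Rightarrow> 'y list set" where
  "condY N C x = {y \<in> rangeY N C. y \<in> SN N x}"

definition condX :: "('x \<Rightarrow> 'y set) \<Rightarrow> 'x list set \<Rightarrow> 'y list \<Rightarrow> 'x list set" where
  "condX N C y = {x \<in> C. y \<in> SN N x}"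

definition assocXY :: "('x list set \<Rightarrow> real) \<Rightarrow> ('x \<Rightarrow> 'y set) \<Rightarrow> 'x list set \<Rightarrow> real set" where
  "assocXY mX N C =
     {mX (condX N C y1 \<inter> condX N C y2) / mX C | y1 y2.
        y1 \<in> rangeY N C \<and> y2 \<in> rangeY N C \<and> y1 \<noteq> y2} - {0}"

definition assocYX :: "('y list set \<Rightarrow> real) \<Rightarrow> ('x \<Rightarrow> 'y set) \<Rightarrow> 'x list set \<Rightarrow> real set" where
  "assocYX mY N C =
     {mY (condY N C x1 \<inter> condY N C x2) / mY (rangeY N C) | x1 x2.
        x1 \<in> C \<and> x2 \<in> C \<and> x1 \<noteq> x2} - {0}"

definition set_succ :: "real set \<Rightarrow> real \<Rightarrow> bool" where
  "set_succ A \<delta> \<longleftrightarrow> A \<noteq> {} \<and> (\<forall>a\<in>A. a > \<delta>)"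

definition set_preceq :: "real set \<Rightarrow> real \<Rightarrow> bool" where
  "set_preceq A \<delta> \<longleftrightarrow> (\<forall>a\<in>A. a \<le> \<delta>)"

definition F_class ::
  "('x list set \<Rightarrow> real) \<Rightarrow> ('y list set \<Rightarrow> real) \<Rightarrow> 'x set \<Rightarrow> ('x \<Rightarrow> 'y set) \<Rightarrow> real \<Rightarrow> nat
     \<Rightarrow> 'x list set set" where
  "F_class mX mY Xset N \<delta> n =
     {C. C \<subseteq> Xn Xset n \<and> finite C \<and> C \<noteq> {} \<and>
         ((set_succ (assocXY mX N C) 0 \<and> set_succ (assocYX mY N C) (\<delta> / real (card C))) \<or>
          (set_preceq (assocXY mX N C) 1 \<and> set_preceq (assocYX mY N C) (\<delta> / real (card C))))}"

definition MI_YX :: "('y list set \<Rightarrow> real) \<Rightarrow> ('x \<Rightarrow> 'y set) \<Rightarrow> real \<Rightarrow> 'x list set \<Rightarrow> real" where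
  "MI_YX mY N \<delta> C = delta_MI mY (rangeY N C) (condY N C ` C) \<delta>"

definition distinguishable ::
  "('y list set \<Rightarrow> real) \<Rightarrow> 'x set \<Rightarrow> ('x \<Rightarrow> 'y set) \<Rightarrow> nat \<Rightarrow> real \<Rightarrow> 'x list set \<Rightarrow> bool" where
  "distinguishable mY Xset N n \<delta> C \<longleftrightarrow>
     C \<subseteq> Xn Xset n \<and> finite C \<and> C \<noteq> {} \<and>
     (\<forall>x1\<in>C. \<forall>x2\<in>C. x1 \<noteq> x2 \<longrightarrow>
        mY (SN N x1 \<inter> SN N x2) / mY (Yn n) \<le> \<delta> / real (card C))"

definition rate ::
  "('y list set \<Rightarrow> real) \<Rightarrow> 'x set \<Rightarrow> ('x \<Rightarrow> 'y set) \<Rightarrow> nat \<Rightarrow> real \<Rightarrow> ereal" where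
  "rate mY Xset N n \<delta> =
     (SUP C \<in> {C. distinguishable mY Xset N n \<delta> C}. ereal (log 2 (real (card C)) / real n))"

definition capacity_star ::
  "('y list set \<Rightarrow> real) \<Rightarrow> 'x set \<Rightarrow> ('x \<Rightarrow> 'y set) \<Rightarrow> (nat \<Rightarrow> real) \<Rightarrow> ereal" where
  "capacity_star mY Xset N \<delta>s = (INF n \<in> {1..}. rate mY Xset N n (\<delta>s n))"

end

theory Submission
  imports Defs
begin

(* Upper bound: in a one-letter (N, delta_1)-distinguishable codebook C, distinct codewords have
   output overlap at most delta_1/|C|, while every output set N x has uncertainty above delta_1.
   Hence the conditional ranges [[Y|x]] themselves form the overlap family, C belongs to the
   class F, and its delta-mutual information is log |C|.  So R_{delta_1}, and with it C*, is at
   most the optimal value I(Ybar; Xbar).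
   Lower bound: every member of the optimal overlap family for Xbar contains its own [[Ybar|x]].
   These x form an alphabet P with log |P| = I(Ybar; Xbar), whose single-letter overlaps are at most
   delta_hat m([[Ybar]]) and distinct-letter overlaps at most dbar m([[Ybar]])/|Xbar|.  By the
   product assumption two distinct words of P^n overlap in at most the product of these bounds,
   which the hypothesis on delta_n keeps below delta_n/|P|^n; so R_{delta_n} >= log |P| for all n. *)

lemma uncertainty_fun_mono:
  assumes "uncertainty_fun U m" "A \<subseteq> B" "B \<subseteq> U"
  shows "m A \<le> m B"
proof -
  have "max (m A) (m B) \<le> m (A \<union> B)"
    using assms unfolding uncertainty_fun_def by (meson order_trans)
  moreover have "A \<union> B = B" using assms(2) by blast
  ultimately show ?thesis by simp
qed

lemma uncertainty_fun_nonneg: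
  assumes "uncertainty_fun U m" "A \<subseteq> U"
  shows "0 \<le> m A"
  using assms unfolding uncertainty_fun_def by (cases "A = {}") (simp_all add: less_imp_le)

lemma prod_le_mult_power_card:
  fixes f :: "'i \<Rightarrow> 'a::linordered_semidom"
  assumes "finite I" "i \<in> I" "\<And>j. j \<in> I \<Longrightarrow> 0 \<le> f j" "\<And>j. j \<in> I \<Longrightarrow> f j \<le> B" "f i \<le> b"
  shows "prod f I \<le> b * B ^ (card I - 1)"
proof -
  have "prod f I = f i * prod f (I - {i})" using assms(1,2) by (rule prod.remove)
  also have "\<dots> \<le> b * B ^ (card I - 1)"
  proof (rule mult_mono)
    show "prod f (I - {i}) \<le> B ^ (card I - 1)"
      using prod_mono[of "I - {i}" f "\<lambda>_. B"] assms by (simp add: card_Diff_singleton)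
    show "0 \<le> b" using assms(2,3,5) by (meson order_trans)
  qed (use assms in \<open>auto intro: prod_nonneg\<close>)
  finally show ?thesis .
qed

lemma overlap_admissible_inj:
  assumes unc: "uncertainty_fun U m" and "Ur \<subseteq> U"
    and adm: "overlap_admissible m Ur (A ` I) d D"
    and large: "\<And>i. i \<in> I \<Longrightarrow> d * m Ur < m (A i)"
  obtains g where "inj_on g D" "g ` D \<subseteq> I" "\<And>S. S \<in> D \<Longrightarrow> A (g S) \<subseteq> S"
proof -
  have "\<forall>S\<in>D. \<exists>i\<in>I. A i \<subseteq> S" using adm by (auto simp: overlap_admissible_def)
  then obtain g where g: "\<And>S. S \<in> D \<Longrightarrow> g S \<in> I \<and> A (g S) \<subseteq> S" by metis
  have "inj_on g D"
  proof (rule inj_onI, rule ccontr)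
    fix S1 S2 assume S: "S1 \<in> D" "S2 \<in> D" "g S1 = g S2" "S1 \<noteq> S2"
    have "A (g S1) \<subseteq> S1 \<inter> S2" using g[OF S(1)] g[OF S(2)] S(3) by auto
    moreover have "S1 \<inter> S2 \<subseteq> U" using adm S(1) \<open>Ur \<subseteq> U\<close> by (auto simp: overlap_admissible_def)
    ultimately have "m (A (g S1)) \<le> m (S1 \<inter> S2)" by (rule uncertainty_fun_mono[OF unc])
    also have "\<dots> \<le> d * m Ur" using adm S by (auto simp: overlap_admissible_def)
    also have "\<dots> < m (A (g S1))" using large g S(1) by blast
    finally show False by simp
  qed
  then show thesis using that g by blast
qed

lemma delta_MI_eq_log_card:
  assumes D: "overlap_family m Ur F d D" and "finite D"
  shows "delta_MI m Ur F d = log 2 (card D)"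
proof -
  define D' where "D' = (SOME D. overlap_family m Ur F d D)"
  have "overlap_family m Ur F d D'" unfolding D'_def using D by (rule someI)
  then obtain f f' where f: "inj_on f D" "f ` D \<subseteq> D'" and f': "inj_on f' D'" "f' ` D' \<subseteq> D"
    using D unfolding overlap_family_def by meson
  have "finite D'" using inj_on_finite[OF f' \<open>finite D\<close>] .
  then have "card D' = card D"
    using card_inj_on_le[OF f] card_inj_on_le[OF f' \<open>finite D\<close>] by simp
  moreover have "\<exists>D. overlap_family m Ur F d D" using D by blast
  ultimately show ?thesis unfolding delta_MI_def D'_def by (simp only: if_True)
qed

lemma overlap_family_self:
  assumes unc: "uncertainty_fun U m" and "Ur \<subseteq> U" and cover: "\<Union>F = Ur"
    and large: "\<And>A. A \<in> F \<Longrightarrow> d * m Ur < m A"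
    and overlap: "\<And>A B. A \<in> F \<Longrightarrow> B \<in> F \<Longrightarrow> A \<noteq> B \<Longrightarrow> m (A \<inter> B) \<le> d * m Ur"
  shows "overlap_family m Ur F d F"
proof -
  have "delta_connected_set m Ur F d S" if "S \<in> F" for S
    unfolding delta_connected_set_def delta_connected_pts_def
    using that by (intro ballI exI[of _ "[S]"]) auto
  then have adm: "overlap_admissible m Ur F d F"
    using cover overlap unfolding overlap_admissible_def by blast
  have "\<exists>f. inj_on f D' \<and> f ` D' \<subseteq> F" if "overlap_admissible m Ur F d D'" for D'
  proof -
    have "overlap_admissible m Ur ((\<lambda>S. S) ` F) d D'" using that by simp
    then obtain f where "inj_on f D'" "f ` D' \<subseteq> (\<lambda>S. S) ` F"
      by (rule overlap_admissible_inj[OF unc \<open>Ur \<subseteq> U\<close>]) (use large in auto)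
    then show ?thesis by auto
  qed
  with adm show ?thesis unfolding overlap_family_def by (intro conjI allI impI)
qed

lemma in_listset_iff_list_all2: "xs \<in> listset As \<longleftrightarrow> list_all2 (\<in>) xs As"
  by (induction As arbitrary: xs) (auto simp: set_Cons_def list_all2_Cons2)

lemma SN_singleton: "SN N [a] = (\<lambda>y. [y]) ` N a"
  by (auto simp: SN_def set_Cons_def)

lemma SN_subset_Yn: "SN N xs \<subseteq> Yn (length xs)"
  by (auto simp: SN_def Yn_def in_listset_iff_list_all2 list_all2_conv_all_nth)

lemma SN_Int:
  "length xs = length ys \<Longrightarrow> SN N xs \<inter> SN N ys = listset (map2 (\<lambda>a b. N a \<inter> N b) xs ys)"
  by (auto simp: SN_def in_listset_iff_list_all2 list_all2_conv_all_nth)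

lemma measure_SN_Int:
  assumes prod: "\<forall>Ss. Ss \<noteq> [] \<longrightarrow> mY (listset Ss) = prod_list (map (mY1 mY) Ss)"
    and "length xs = n" "length ys = n" "1 \<le> n"
  shows "mY (SN N xs \<inter> SN N ys) = (\<Prod>i<n. mY1 mY (N (xs ! i) \<inter> N (ys ! i)))"
proof -
  have "map2 (\<lambda>a b. N a \<inter> N b) xs ys \<noteq> []" using assms(2-4) by auto
  then have "mY (SN N xs \<inter> SN N ys) = prod_list (map (mY1 mY) (map2 (\<lambda>a b. N a \<inter> N b) xs ys))"
    using prod SN_Int[of xs ys N] assms(2,3) by simp
  also have "\<dots> = (\<Prod>i<n. mY1 mY (N (xs ! i) \<inter> N (ys ! i)))"
    using assms by (simp add: prod.list_conv_set_nth atLeast0LessThan)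
  finally show ?thesis .
qed

lemma mY1_nonneg: "uncertainty_fun (Yn 1) mY \<Longrightarrow> 0 \<le> mY1 mY S"
  unfolding mY1_def by (erule uncertainty_fun_nonneg) (auto simp: Yn_def)

lemma condY_eq_SN: "x \<in> C \<Longrightarrow> condY N C x = SN N x"
  by (auto simp: condY_def rangeY_def)

lemma rangeY_subset_Yn: "C \<subseteq> Xn Xset n \<Longrightarrow> rangeY N C \<subseteq> Yn n"
  using SN_subset_Yn by (fastforce simp: rangeY_def Xn_def)

lemma measure_condY_le_rangeY:
  assumes "uncertainty_fun (Yn n) mY" "C \<subseteq> Xn Xset n"
  shows "mY (condY N C x) \<le> mY (rangeY N C)"
  using rangeY_subset_Yn[OF assms(2)]
  by (intro uncertainty_fun_mono[OF assms(1)]) (auto simp: condY_def)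

lemma one_letter_condY:
  assumes "C \<subseteq> Xn Xset 1" "x \<in> C"
  obtains a where "a \<in> Xset" "x = [a]" "condY N C x = (\<lambda>y. [y]) ` N a"
proof -
  obtain a where "x = [a]" "a \<in> Xset"
    using assms by (cases x) (auto simp: Xn_def)
  then show thesis using that condY_eq_SN[OF assms(2)] SN_singleton by metis
qed

lemma one_letter_condY_gt:
  assumes "\<forall>a\<in>Xset. d < mY1 mY (N a)" "C \<subseteq> Xn Xset 1" "x \<in> C"
  shows "d < mY (condY N C x)"
  using assms by (metis mY1_def one_letter_condY)

lemma distinguishable_condY_overlap:
  assumes "mY (Yn n) = 1" "distinguishable mY Xset N n d C" "x1 \<in> C" "x2 \<in> C" "x1 \<noteq> x2"
  shows "mY (condY N C x1 \<inter> condY N C x2) \<le> d / real (card C)"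
  using assms by (auto simp: distinguishable_def condY_eq_SN)

lemma assocXY_le_one:
  assumes "uncertainty_fun (Xn Xset n) mX" "C \<subseteq> Xn Xset n" "C \<noteq> {}"
  shows "set_preceq (assocXY mX N C) 1"
  unfolding set_preceq_def
proof
  fix a assume "a \<in> assocXY mX N C"
  then obtain y1 y2 where a: "a = mX (condX N C y1 \<inter> condX N C y2) / mX C"
    unfolding assocXY_def by blast
  have "mX (condX N C y1 \<inter> condX N C y2) \<le> mX C"
    by (rule uncertainty_fun_mono[OF assms(1) _ assms(2)]) (auto simp: condX_def)
  moreover have "0 < mX C" using assms unfolding uncertainty_fun_def by blast
  ultimately show "a \<le> 1" using a by simp
qed

lemma distinguishable_in_F_class:
  assumes uncX: "uncertainty_fun (Xn Xset n) mX" and uncY: "uncertainty_fun (Yn n) mY"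
    and norm: "mY (Yn n) = 1" and dist: "distinguishable mY Xset N n d C"
  shows "C \<in> F_class mX mY Xset N (d / mY (rangeY N C)) n"
proof -
  have C: "C \<subseteq> Xn Xset n" "finite C" "C \<noteq> {}"
    using dist unfolding distinguishable_def by auto
  have "0 \<le> mY (rangeY N C)"
    using uncertainty_fun_nonneg[OF uncY rangeY_subset_Yn[OF C(1)]] .
  then have "set_preceq (assocYX mY N C) (d / real (card C) / mY (rangeY N C))"
    unfolding set_preceq_def assocYX_def
    using distinguishable_condY_overlap[OF norm dist] divide_right_mono by blast
  with C assocXY_le_one[OF uncX C(1,3)] show ?thesis
    unfolding F_class_def by (auto simp: divide_divide_eq_left mult.commute)
qed

lemma MI_YX_distinguishable:
  assumes uncY: "uncertainty_fun (Yn n) mY" and norm: "mY (Yn n) = 1"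
    and dist: "distinguishable mY Xset N n d C" and "0 \<le> d"
    and large: "\<And>x. x \<in> C \<Longrightarrow> d < mY (condY N C x)"
  shows "MI_YX mY N (d / mY (rangeY N C) / real (card C)) C = log 2 (real (card C))"
proof -
  define R where "R = rangeY N C"
  define k where "k = real (card C)"
  have C: "C \<subseteq> Xn Xset n" "finite C" "C \<noteq> {}"
    using dist unfolding distinguishable_def by auto
  then obtain x0 where "x0 \<in> C" by blast
  then have "0 < mY R"
    using large \<open>0 \<le> d\<close> measure_condY_le_rangeY[OF uncY C(1), of N x0] unfolding R_def
    by fastforce
  moreover have "1 \<le> k" using C unfolding k_def by (simp add: Suc_leI card_gt_0_iff)
  ultimately have dR: "d / mY R / k * mY R = d / k" and "d / k \<le> d"
    using \<open>0 \<le> d\<close> by (auto simp: divide_le_eq mult_le_cancel_left1 order_trans [of _ 0])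
  have overlap: "mY (condY N C x1 \<inter> condY N C x2) \<le> d / k" if "x1 \<in> C" "x2 \<in> C" "x1 \<noteq> x2" for x1 x2
    using distinguishable_condY_overlap[OF norm dist that] unfolding k_def .
  have "inj_on (condY N C) C"
  proof (rule inj_onI, rule ccontr)
    fix x1 x2 assume x: "x1 \<in> C" "x2 \<in> C" "condY N C x1 = condY N C x2" "x1 \<noteq> x2"
    then have "mY (condY N C x1) \<le> d / k" using overlap by force
    then show False using large[OF x(1)] \<open>d / k \<le> d\<close> by simp
  qed
  then have "card (condY N C ` C) = card C" by (rule card_image)
  have "overlap_family mY R (condY N C ` C) (d / mY R / k) (condY N C ` C)"
  proof (rule overlap_family_self[OF uncY])
    show "R \<subseteq> Yn n" unfolding R_def using C(1) by (rule rangeY_subset_Yn)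
    show "\<Union> (condY N C ` C) = R" unfolding R_def by (auto simp: condY_def rangeY_def)
    show "d / mY R / k * mY R < mY A" if "A \<in> condY N C ` C" for A
      using that large dR \<open>d / k \<le> d\<close> by fastforce
    show "mY (A \<inter> B) \<le> d / mY R / k * mY R"
      if "A \<in> condY N C ` C" "B \<in> condY N C ` C" "A \<noteq> B" for A B
      using that overlap dR by fastforce
  qed
  then have "delta_MI mY R (condY N C ` C) (d / mY R / k) = log 2 (card (condY N C ` C))"
    using C(2) by (intro delta_MI_eq_log_card) auto
  then show ?thesis
    using \<open>card (condY N C ` C) = card C\<close> unfolding MI_YX_def R_def k_def by simp
qed

lemma rate_one_le_SUP_MI_YX:
  assumes uncX: "uncertainty_fun (Xn Xset 1) mX" and uncY: "uncertainty_fun (Yn 1) mY"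
    and norm: "mY (Yn 1) = 1" and "0 \<le> d" and big: "\<forall>a\<in>Xset. d < mY1 mY (N a)"
  shows "rate mY Xset N 1 d \<le>
    (SUP p \<in> {(dt, C). 0 \<le> dt \<and> C \<in> F_class mX mY Xset N dt 1 \<and> dt \<le> d / mY (rangeY N C)}.
       ereal (MI_YX mY N (fst p / real (card (snd p))) (snd p)))" (is "_ \<le> ?SUP")
  unfolding rate_def
proof (rule SUP_least)
  fix C assume "C \<in> {C. distinguishable mY Xset N 1 d C}"
  then have dist: "distinguishable mY Xset N 1 d C" by simp
  then have "C \<subseteq> Xn Xset 1" by (simp add: distinguishable_def)
  then have large: "\<And>x. x \<in> C \<Longrightarrow> d < mY (condY N C x)"
    using one_letter_condY_gt[OF big] by blast
  have "0 \<le> mY (rangeY N C)"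
    using uncertainty_fun_nonneg[OF uncY rangeY_subset_Yn[OF \<open>C \<subseteq> Xn Xset 1\<close>]] .
  then have "(d / mY (rangeY N C), C) \<in>
      {(dt, C). 0 \<le> dt \<and> C \<in> F_class mX mY Xset N dt 1 \<and> dt \<le> d / mY (rangeY N C)}"
    using distinguishable_in_F_class[OF uncX uncY norm dist] \<open>0 \<le> d\<close> by simp
  moreover have "log 2 (real (card C)) / real 1 = MI_YX mY N (d / mY (rangeY N C) / real (card C)) C"
    using MI_YX_distinguishable[OF uncY norm dist \<open>0 \<le> d\<close> large] by simp
  ultimately show "ereal (log 2 (real (card C)) / real 1) \<le> ?SUP"
    by (metis (no_types, lifting) SUP_upper fst_conv snd_conv)
qed

lemma lists_distinguishable:
  assumes unc: "uncertainty_fun (Yn 1) mY" and norm: "mY (Yn n) = 1" and "1 \<le> n"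
    and prod: "\<forall>Ss. Ss \<noteq> [] \<longrightarrow> mY (listset Ss) = prod_list (map (mY1 mY) Ss)"
    and P: "finite P" "P \<subseteq> Xset" "P \<noteq> {}"
    and B: "\<And>a b. a \<in> P \<Longrightarrow> b \<in> P \<Longrightarrow> mY1 mY (N a \<inter> N b) \<le> B"
    and \<beta>: "\<And>a b. a \<in> P \<Longrightarrow> b \<in> P \<Longrightarrow> a \<noteq> b \<Longrightarrow> mY1 mY (N a \<inter> N b) \<le> \<beta>"
    and budget: "\<beta> * B ^ (n - 1) \<le> e / real (card P) ^ n"
  shows "distinguishable mY Xset N n e {xs. set xs \<subseteq> P \<and> length xs = n}"
proof -
  let ?C = "{xs. set xs \<subseteq> P \<and> length xs = n}"
  have overlap: "mY (SN N xs \<inter> SN N ys) \<le> \<beta> * B ^ (n - 1)"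
    if xs: "xs \<in> ?C" and ys: "ys \<in> ?C" and "xs \<noteq> ys" for xs ys
  proof -
    have len: "length xs = n" "length ys = n" and inP: "\<And>i. i < n \<Longrightarrow> xs ! i \<in> P \<and> ys ! i \<in> P"
      using xs ys by (auto simp: nth_mem subsetD)
    obtain i where "i < n" "xs ! i \<noteq> ys ! i"
      using \<open>xs \<noteq> ys\<close> len nth_equalityI by metis
    have "mY (SN N xs \<inter> SN N ys) = (\<Prod>i<n. mY1 mY (N (xs ! i) \<inter> N (ys ! i)))"
      using prod len \<open>1 \<le> n\<close> by (rule measure_SN_Int)
    also have "\<dots> \<le> \<beta> * B ^ (card {..<n} - 1)"
      using \<open>i < n\<close> \<open>xs ! i \<noteq> ys ! i\<close> inP mY1_nonneg[OF unc] B \<beta>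
      by (intro prod_le_mult_power_card) auto
    finally show ?thesis by simp
  qed
  obtain a where "a \<in> P" using P(3) by blast
  then have "replicate n a \<in> ?C" by (auto simp: set_replicate_conv_if)
  then show ?thesis
    unfolding distinguishable_def
  proof (intro conjI ballI impI)
    show "?C \<subseteq> Xn Xset n" using P(2) by (auto simp: Xn_def)
    show "finite ?C" using P(1) by (rule finite_lists_length_eq)
    fix xs ys assume "xs \<in> ?C" "ys \<in> ?C" "xs \<noteq> ys"
    then have "mY (SN N xs \<inter> SN N ys) \<le> e / real (card P) ^ n"
      by (rule order_trans[OF overlap budget])
    then show "mY (SN N xs \<inter> SN N ys) / mY (Yn n) \<le> e / real (card ?C)"
      using norm by (simp add: card_lists_length_eq[OF P(1)])
  qed blast
qed

lemma log_card_le_rate: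
  assumes "distinguishable mY Xset N n e {xs. set xs \<subseteq> P \<and> length xs = n}"
    and "finite P" "P \<noteq> {}" "1 \<le> n"
  shows "ereal (log 2 (card P)) \<le> rate mY Xset N n e"
proof -
  have "log 2 (card P) = log 2 (card {xs. set xs \<subseteq> P \<and> length xs = n}) / n"
    using assms(2-4) by (simp add: card_lists_length_eq log_nat_power card_gt_0_iff)
  also have "ereal \<dots> \<le> rate mY Xset N n e"
    unfolding rate_def using assms(1) by (intro SUP_upper) simp
  finally show ?thesis .
qed

(* The product bound for two distinct words of length n over K letters, whose single-letter
   overlaps are at most h r and distinct-letter overlaps at most dbar r / c, against the
   budget e / K^n of an (N, e)-distinguishable codebook with K^n words. *)
lemma overlap_budget:
  fixes dbar h r c K e :: real
  assumes "0 \<le> dbar" "0 \<le> h" "0 \<le> r" "1 \<le> K" "K \<le> c" "1 \<le> n"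
    and "dbar * r ^ n * (h * c) ^ (n - 1) \<le> e"
  shows "dbar / c * r * (h * r) ^ (n - 1) \<le> e / K ^ n"
proof -
  obtain m where n: "n = Suc m" using \<open>1 \<le> n\<close> by (cases n) auto
  have "0 < c" using assms(4,5) by simp
  have "0 \<le> dbar * r ^ n * (h * c) ^ m" using assms(1-3) \<open>0 < c\<close> by simp
  then have "0 \<le> e" using assms(7) unfolding n by simp
  have "dbar / c * r * (h * r) ^ m = dbar * r ^ n * (h * c) ^ m / c ^ n"
    using \<open>0 < c\<close> unfolding n by (simp add: power_mult_distrib)
  also have "\<dots> \<le> e / c ^ n"
    using assms(7) \<open>0 < c\<close> unfolding n by (intro divide_right_mono) auto
  also have "\<dots> \<le> e / K ^ n"
    using assms(4,5) \<open>0 \<le> e\<close> by (intro divide_left_mono power_mono mult_pos_pos) auto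
  finally show ?thesis unfolding n by simp
qed

lemma one_letter_overlap_alphabet:
  assumes unc: "uncertainty_fun (Yn 1) mY" and C: "C \<subseteq> Xn Xset 1" "finite C"
    and adm: "overlap_admissible mY (rangeY N C) (condY N C ` C) d D"
    and large: "\<And>x. x \<in> C \<Longrightarrow> d * mY (rangeY N C) < mY (condY N C x)"
  obtains P where "P \<subseteq> Xset" "finite D" "card P = card D" "card D \<le> card C"
    "\<And>a b. a \<in> P \<Longrightarrow> b \<in> P \<Longrightarrow> \<exists>S\<in>D. mY1 mY (N a \<inter> N b) \<le> mY S"
    "\<And>a b. a \<in> P \<Longrightarrow> b \<in> P \<Longrightarrow> a \<noteq> b \<Longrightarrow> mY1 mY (N a \<inter> N b) \<le> d * mY (rangeY N C)"
proof -
  obtain g where g: "inj_on g D" "g ` D \<subseteq> C" "\<And>S. S \<in> D \<Longrightarrow> condY N C (g S) \<subseteq> S"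
    using overlap_admissible_inj[OF unc rangeY_subset_Yn[OF C(1)] adm large] by blast
  have "\<exists>a. g S = [a] \<and> (\<lambda>y. [y]) ` N a \<subseteq> S" if "S \<in> D" for S
  proof -
    have "g S \<in> C" using g(2) that by blast
    then obtain a where "g S = [a]" "condY N C (g S) = (\<lambda>y. [y]) ` N a"
      by (rule one_letter_condY[OF C(1)])
    then show ?thesis using g(3)[OF that] by auto
  qed
  then obtain s where s: "\<And>S. S \<in> D \<Longrightarrow> g S = [s S]"
    "\<And>S. S \<in> D \<Longrightarrow> (\<lambda>y. [y]) ` N (s S) \<subseteq> S"
    by metis
  have "inj_on s D"
  proof (rule inj_onI)
    fix S1 S2 assume "S1 \<in> D" "S2 \<in> D" "s S1 = s S2"
    then have "g S1 = g S2" using s(1) by simp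
    then show "S1 = S2" using g(1) \<open>S1 \<in> D\<close> \<open>S2 \<in> D\<close> by (simp add: inj_on_eq_iff)
  qed
  have "finite D" using inj_on_finite[OF g(1,2) C(2)] .
  have "s ` D \<subseteq> Xset" using g(2) s(1) C(1) by (force simp: Xn_def)
  have SY: "S \<inter> S' \<subseteq> Yn 1" if "S \<in> D" for S S'
    using adm rangeY_subset_Yn[OF C(1)] that by (auto simp: overlap_admissible_def)
  have sub: "(\<lambda>y. [y]) ` (N (s S) \<inter> N (s S')) \<subseteq> S \<inter> S'" if "S \<in> D" "S' \<in> D" for S S'
    using s(2)[OF that(1)] s(2)[OF that(2)] by blast
  have overlap_le: "mY1 mY (N (s S) \<inter> N (s S')) \<le> mY (S \<inter> S')" if "S \<in> D" "S' \<in> D" for S S'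
    unfolding mY1_def using sub[OF that] SY[OF that(1)] by (rule uncertainty_fun_mono[OF unc])
  show thesis
  proof (rule that)
    show "card (s ` D) = card D" using \<open>inj_on s D\<close> by (rule card_image)
    show "card D \<le> card C" using card_inj_on_le[OF g(1,2) C(2)] .
    show "\<exists>S\<in>D. mY1 mY (N a \<inter> N b) \<le> mY S" if a: "a \<in> s ` D" and b: "b \<in> s ` D" for a b
    proof -
      obtain S S' where S: "S \<in> D" "S' \<in> D" and ab: "a = s S" "b = s S'" using a b by blast
      have "mY (S \<inter> S') \<le> mY S"
        using SY[OF S(1), of S'] SY[OF S(1), of S] by (intro uncertainty_fun_mono[OF unc]) auto
      then have "mY1 mY (N a \<inter> N b) \<le> mY S" using order_trans[OF overlap_le[OF S]] ab by simp
      with S(1) show ?thesis by blast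
    qed
    show "mY1 mY (N a \<inter> N b) \<le> d * mY (rangeY N C)"
      if a: "a \<in> s ` D" and b: "b \<in> s ` D" and "a \<noteq> b" for a b
    proof -
      obtain S S' where S: "S \<in> D" "S' \<in> D" and ab: "a = s S" "b = s S'" using a b by blast
      then have "mY (S \<inter> S') \<le> d * mY (rangeY N C)"
        using adm \<open>a \<noteq> b\<close> by (auto simp: overlap_admissible_def)
      with overlap_le[OF S] ab show ?thesis by simp
    qed
  qed fact+
qed

lemma MI_YX_le_capacity_star:
  fixes \<delta> :: "nat \<Rightarrow> real"
  assumes unc: "uncertainty_fun (Yn 1) mY" and norm: "\<forall>n\<ge>1. mY (Yn n) = 1"
    and prod: "\<forall>Ss. Ss \<noteq> [] \<longrightarrow> mY (listset Ss) = prod_list (map (mY1 mY) Ss)"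
    and C: "C \<subseteq> Xn Xset 1" "finite C" "C \<noteq> {}"
    and D: "overlap_family mY (rangeY N C) (condY N C ` C) (dbar / real (card C)) D"
    and "0 \<le> \<delta> 1" and large: "\<And>x. x \<in> C \<Longrightarrow> \<delta> 1 < mY (condY N C x)"
    and dbar: "0 \<le> dbar" "dbar \<le> \<delta> 1 / mY (rangeY N C)"
    and dn: "\<forall>n>1. dbar * (Max ((\<lambda>S. mY S / mY (rangeY N C)) ` D) * real (card C)) ^ (n - 1) \<le> \<delta> n"
  shows "ereal (MI_YX mY N (dbar / real (card C)) C) \<le> capacity_star mY Xset N \<delta>"
proof -
  define r c h where "r = mY (rangeY N C)" and "c = real (card C)"
    and "h = Max ((\<lambda>S. mY S / r) ` D)"
  obtain x0 where "x0 \<in> C" using C(3) by blast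
  then have "0 < r"
    using large measure_condY_le_rangeY[OF unc C(1), of N x0] \<open>0 \<le> \<delta> 1\<close> unfolding r_def
    by fastforce
  have "r \<le> 1"
    using uncertainty_fun_mono[OF unc rangeY_subset_Yn[OF C(1)] order_refl] norm unfolding r_def by simp
  have "1 \<le> c" using C unfolding c_def by (simp add: Suc_leI card_gt_0_iff)
  have "dbar * r \<le> \<delta> 1" using dbar(2) \<open>0 < r\<close> unfolding r_def by (simp add: pos_le_divide_eq)
  moreover have "dbar / c * r \<le> dbar * r"
    using \<open>1 \<le> c\<close> \<open>0 \<le> dbar\<close> \<open>0 < r\<close> by (simp add: divide_le_eq mult_le_cancel_left1 mult_less_0_iff)
  ultimately have "dbar / c * r \<le> \<delta> 1" by linarith
  then have small: "\<And>x. x \<in> C \<Longrightarrow> dbar / c * r < mY (condY N C x)"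
    using large by (rule order_le_less_trans)
  have adm: "overlap_admissible mY (rangeY N C) (condY N C ` C) (dbar / c) D"
    using D unfolding overlap_family_def c_def by simp
  obtain P where P: "P \<subseteq> Xset" "finite D" "card P = card D" "card D \<le> card C"
    and single: "\<And>a b. a \<in> P \<Longrightarrow> b \<in> P \<Longrightarrow> \<exists>S\<in>D. mY1 mY (N a \<inter> N b) \<le> mY S"
    and distinct: "\<And>a b. a \<in> P \<Longrightarrow> b \<in> P \<Longrightarrow> a \<noteq> b \<Longrightarrow> mY1 mY (N a \<inter> N b) \<le> dbar / c * r"
    using one_letter_overlap_alphabet[OF unc C(1,2) adm small[unfolded r_def]] unfolding r_def by blast
  have "D \<noteq> {}"
    using adm \<open>0 < r\<close> unc unfolding overlap_admissible_def uncertainty_fun_def r_def by auto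
  then have "1 \<le> card P" using P(2,3) by (simp add: Suc_leI card_gt_0_iff)
  then have "finite P" "P \<noteq> {}" by (auto intro: card_ge_0_finite)
  have S_le: "mY S \<le> h * r" if "S \<in> D" for S
  proof -
    have "mY S / r \<le> h" unfolding h_def using P(2) that by (intro Max_ge) auto
    then show ?thesis using \<open>0 < r\<close> by (simp add: pos_divide_le_eq)
  qed
  have "0 \<le> h"
  proof -
    obtain S where "S \<in> D" using \<open>D \<noteq> {}\<close> by blast
    then have "S \<subseteq> Yn 1"
      using adm rangeY_subset_Yn[OF C(1)] by (auto simp: overlap_admissible_def)
    then have "0 \<le> mY S" by (rule uncertainty_fun_nonneg[OF unc])
    then have "0 \<le> h * r" using S_le[OF \<open>S \<in> D\<close>] by linarith
    then show ?thesis using \<open>0 < r\<close> by (simp add: zero_le_mult_iff)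
  qed
  have B: "mY1 mY (N a \<inter> N b) \<le> h * r" if ab: "a \<in> P" "b \<in> P" for a b
  proof -
    obtain S where "S \<in> D" "mY1 mY (N a \<inter> N b) \<le> mY S" using single[OF ab] by blast
    then show ?thesis using S_le[OF \<open>S \<in> D\<close>] by linarith
  qed
  have "ereal (log 2 (card P)) \<le> rate mY Xset N n (\<delta> n)" if "1 \<le> n" for n
  proof -
    have "dbar * r ^ n * (h * c) ^ (n - 1) \<le> \<delta> n"
    proof (cases "n = 1")
      case False
      then have "dbar * (h * c) ^ (n - 1) \<le> \<delta> n"
        using dn that unfolding h_def r_def c_def by simp
      moreover have "r ^ n \<le> 1" using \<open>0 < r\<close> \<open>r \<le> 1\<close> by (simp add: power_le_one)
      moreover have "0 \<le> dbar * (h * c) ^ (n - 1)" using \<open>0 \<le> dbar\<close> \<open>0 \<le> h\<close> \<open>1 \<le> c\<close> by simp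
      ultimately show ?thesis
        using mult_left_le_one_le[of "dbar * (h * c) ^ (n - 1)" "r ^ n"] \<open>0 < r\<close>
        by (simp add: algebra_simps)
    qed (use \<open>dbar * r \<le> \<delta> 1\<close> in simp)
    then have "dbar / c * r * (h * r) ^ (n - 1) \<le> \<delta> n / real (card P) ^ n"
      using \<open>0 \<le> dbar\<close> \<open>0 \<le> h\<close> \<open>0 < r\<close> \<open>1 \<le> card P\<close> P(3,4) that
      by (intro overlap_budget) (auto simp: c_def)
    then have "distinguishable mY Xset N n (\<delta> n) {xs. set xs \<subseteq> P \<and> length xs = n}"
      using norm that
      by (intro lists_distinguishable[OF unc _ that prod \<open>finite P\<close> P(1) \<open>P \<noteq> {}\<close> B distinct]) auto
    then show ?thesis using \<open>finite P\<close> \<open>P \<noteq> {}\<close> that by (rule log_card_le_rate)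
  qed
  then have "ereal (log 2 (card P)) \<le> capacity_star mY Xset N \<delta>"
    unfolding capacity_star_def by (intro INF_greatest) auto
  then show ?thesis
    using delta_MI_eq_log_card[OF D P(2)] P(3) unfolding MI_YX_def by simp
qed

theorem theorem13:
  fixes Xset :: "'x::real_normed_vector set"
    and N :: "'x \<Rightarrow> 'y set"
    and mX :: "'x list set \<Rightarrow> real"
    and mY :: "'y list set \<Rightarrow> real"
    and xstar :: 'x
    and \<delta> :: "nat \<Rightarrow> real"
    and Cbar :: "'x list set"
    and dbar :: real
    and D :: "'y list set set"
  assumes tb: "totally_bounded Xset"
    and uncX: "\<forall>n\<ge>1. uncertainty_fun (Xn Xset n) mX"
    and uncY: "\<forall>n\<ge>1. uncertainty_fun (Yn n) mY"
    and normY: "\<forall>n\<ge>1. mY (Yn n) = 1"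
    and xstar: "xstar \<in> Xset" "\<forall>x\<in>Xset. mY1 mY (N xstar) \<le> mY1 mY (N x)"
    and d1: "0 \<le> \<delta> 1" "\<delta> 1 < mY1 mY (N xstar)"
    and Cbar_F: "Cbar \<in> F_class mX mY Xset N dbar 1"
    and dbar: "0 \<le> dbar" "dbar \<le> \<delta> 1 / mY (rangeY N Cbar)"
    and opt: "ereal (MI_YX mY N (dbar / real (card Cbar)) Cbar) =
       (SUP p \<in> {(dt, C). 0 \<le> dt \<and> C \<in> F_class mX mY Xset N dt 1 \<and> dt \<le> \<delta> 1 / mY (rangeY N C)}.
          ereal (MI_YX mY N (fst p / real (card (snd p))) (snd p)))"
    and D: "overlap_family mY (rangeY N Cbar) (condY N Cbar ` Cbar) (dbar / real (card Cbar)) D"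
    and dn: "\<forall>n>1. dbar * ((Max ((\<lambda>S. mY S / mY (rangeY N Cbar)) ` D)) * real (card Cbar)) ^ (n - 1) \<le> \<delta> n
                 \<and> \<delta> n < 1"
    and prod: "\<forall>Ss. Ss \<noteq> [] \<longrightarrow> mY (listset Ss) = prod_list (map (mY1 mY) Ss)"
  shows "capacity_star mY Xset N \<delta> = ereal (MI_YX mY N (dbar / real (card Cbar)) Cbar)"
proof -
  have uncY1: "uncertainty_fun (Yn 1) mY" using uncY by simp
  have big: "\<forall>a\<in>Xset. \<delta> 1 < mY1 mY (N a)" using xstar(2) d1(2) by fastforce
  have Cbar: "Cbar \<subseteq> Xn Xset 1" "finite Cbar" "Cbar \<noteq> {}"
    using Cbar_F unfolding F_class_def by auto
  have "capacity_star mY Xset N \<delta> \<le> rate mY Xset N 1 (\<delta> 1)"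
    unfolding capacity_star_def by (rule INF_lower) simp
  also have "\<dots> \<le> ereal (MI_YX mY N (dbar / real (card Cbar)) Cbar)"
    unfolding opt using uncX uncY1 normY d1(1) big by (intro rate_one_le_SUP_MI_YX) auto
  finally have "capacity_star mY Xset N \<delta> \<le> ereal (MI_YX mY N (dbar / real (card Cbar)) Cbar)" .
  moreover have "ereal (MI_YX mY N (dbar / real (card Cbar)) Cbar) \<le> capacity_star mY Xset N \<delta>"
  proof (rule MI_YX_le_capacity_star[where \<delta> = \<delta>, OF uncY1 normY prod Cbar D d1(1)
        one_letter_condY_gt[OF big Cbar(1)] dbar])
    show "\<forall>n>1. dbar * (Max ((\<lambda>S. mY S / mY (rangeY N Cbar)) ` D) * real (card Cbar)) ^ (n - 1) \<le> \<delta> n"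
      using dn by blast
  qed
  ultimately show ?thesis by (rule order_antisym)
qed

end
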